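(* Let $\bm{r}_i=(r_{1i},\ldots,r_{ni})^{T}\in\mathbb{R}^{n}$ and $w_i\in\mathbb{R}$ for $i=1,\ldots,m$. For each $j=1,\ldots,n$ let $$p_j=\max(r_{j1}+w_1,\ldots,r_{jm}+w_m),\qquad q_j=\min(r_{j1}-w_1,\ldots,r_{jm}-w_m).$$ Then $$\min_{\bm{x}\in\mathbb{R}^{n}}\max_{1\le i\le m}\big(\rho(\bm{r}_i,\bm{x})+w_i\big)=\Delta:=\tfrac12\max(p_1-q_1,\ldots,p_n-q_n),$$ where $\rho(\bm{x},\bm{y})=\max_{1\le j\le n}|x_j-y_j|$ is the Chebyshev distance, and the minimum is attained at every vector $\bm{x}=(x_j)$ with $p_j-\Delta\le x_j\le q_j+\Delta$ for all $j=1,\ldots,n$. *)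

theory Defs
  imports "HOL-Analysis.Analysis"
begin

text \<open>Chebyshev distance on R^n (n = CARD('n), n \<ge> 1 automatically).\<close>
definition cheb_dist :: "real^'n::finite \<Rightarrow> real^'n \<Rightarrow> real" where
  "cheb_dist x y = Max (range (\<lambda>j. \<bar>x $ j - y $ j\<bar>))"

end

theory Submission
  imports Defs
begin

text \<open>
  In a single coordinate j the triangle inequality through x gives
  (r i $ j + w i) - (r i' $ j - w i') \<le> 2 * (MAX k. cheb_dist (r k) x + w k),
  so the weighted radius is at least (p j - q j) / 2 for every j, i.e. at least \<Delta>.
  Conversely, if every x $ j lies in [p j - \<Delta>, q j + \<Delta>], then
  \<bar>r i $ j - x $ j\<bar> + w i \<le> \<Delta> for all i and j; the midpoint of p and q is such an x.
\<close>

lemma cheb_dist_ge_component: "\<bar>x $ j - y $ j\<bar> \<le> cheb_dist x y"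
  unfolding cheb_dist_def by (rule Max_ge) auto

lemma cheb_dist_le_iff: "cheb_dist x y \<le> c \<longleftrightarrow> (\<forall>j. \<bar>x $ j - y $ j\<bar> \<le> c)"
  unfolding cheb_dist_def by (subst Max_le_iff) auto

lemma Max_range_attained:
  fixes f :: "'a::finite \<Rightarrow> 'b::linorder"
  obtains i where "Max (range f) = f i"
proof -
  have "Max (range f) \<in> range f" by (rule Max_in) auto
  then show thesis using that by blast
qed

lemma Min_range_attained:
  fixes f :: "'a::finite \<Rightarrow> 'b::linorder"
  obtains i where "Min (range f) = f i"
proof -
  have "Min (range f) \<in> range f" by (rule Min_in) auto
  then show thesis using that by blast
qed

lemma weighted_cheb_radius_lower_bound:
  fixes r :: "'m::finite \<Rightarrow> real^'n::finite"
  shows "(r i $ j + w i) - (r i' $ j - w i')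
           \<le> 2 * Max (range (\<lambda>i. cheb_dist (r i) x + w i))"
proof -
  have radius: "cheb_dist (r k) x + w k \<le> Max (range (\<lambda>i. cheb_dist (r i) x + w i))" for k
    by (rule Max_ge) auto
  show ?thesis
    using radius[of i] radius[of i'] cheb_dist_ge_component[of "r i" j x]
      cheb_dist_ge_component[of "r i'" j x]
    by linarith
qed

lemma weighted_cheb_radius_upper_bound:
  fixes r :: "'m::finite \<Rightarrow> real^'n::finite"
  assumes lo: "\<And>i j. r i $ j + w i - d \<le> x $ j"
    and hi: "\<And>i j. x $ j \<le> r i $ j - w i + d"
  shows "Max (range (\<lambda>i. cheb_dist (r i) x + w i)) \<le> d"
proof -
  have "\<bar>r i $ j - x $ j\<bar> \<le> d - w i" for i j
    using lo[of i j] hi[of j i] by (auto simp: abs_le_iff)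
  then have "cheb_dist (r i) x + w i \<le> d" for i
    using cheb_dist_le_iff[of "r i" x "d - w i"] by simp
  then show ?thesis by (subst Max_le_iff) auto
qed

theorem corollary2:
  fixes r :: "'m::finite \<Rightarrow> real^'n::finite"
    and w :: "'m \<Rightarrow> real"
    and p q :: "'n \<Rightarrow> real"
    and \<Delta> :: real
  assumes p_def: "\<And>j. p j = Max (range (\<lambda>i. r i $ j + w i))"
    and q_def: "\<And>j. q j = Min (range (\<lambda>i. r i $ j - w i))"
    and Delta_def: "\<Delta> = Max (range (\<lambda>j. p j - q j)) / 2"
  shows "(\<forall>x. \<Delta> \<le> Max (range (\<lambda>i. cheb_dist (r i) x + w i)))
       \<and> (\<exists>x. Max (range (\<lambda>i. cheb_dist (r i) x + w i)) = \<Delta>)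
       \<and> (\<forall>x. (\<forall>j. p j - \<Delta> \<le> x $ j \<and> x $ j \<le> q j + \<Delta>)
              \<longrightarrow> Max (range (\<lambda>i. cheb_dist (r i) x + w i)) = \<Delta>)"
proof -
  have p_ge: "r i $ j + w i \<le> p j" for i j unfolding p_def by (rule Max_ge) auto
  have q_le: "q j \<le> r i $ j - w i" for i j unfolding q_def by (rule Min_le) auto
  have pq_le: "p j - q j \<le> 2 * \<Delta>" for j unfolding Delta_def by (simp add: Max_ge)
  obtain j0 where j0: "2 * \<Delta> = p j0 - q j0"
    using Max_range_attained[of "\<lambda>j. p j - q j"] Delta_def by auto
  obtain i1 where i1: "p j0 = r i1 $ j0 + w i1"
    using Max_range_attained[of "\<lambda>i. r i $ j0 + w i"] p_def by auto
  obtain i2 where i2: "q j0 = r i2 $ j0 - w i2"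
    using Min_range_attained[of "\<lambda>i. r i $ j0 - w i"] q_def by auto
  have lower: "\<Delta> \<le> Max (range (\<lambda>i. cheb_dist (r i) x + w i))" for x
    using weighted_cheb_radius_lower_bound[of r i1 j0 w i2 x] i1 i2 j0 by linarith
  have optimal: "Max (range (\<lambda>i. cheb_dist (r i) x + w i)) = \<Delta>"
    if "\<forall>j. p j - \<Delta> \<le> x $ j \<and> x $ j \<le> q j + \<Delta>" for x
  proof (rule antisym)
    show "Max (range (\<lambda>i. cheb_dist (r i) x + w i)) \<le> \<Delta>"
    proof (rule weighted_cheb_radius_upper_bound)
      show "r i $ j + w i - \<Delta> \<le> x $ j" for i j
        using that p_ge[of i j] by (auto dest: spec[of _ j])
      show "x $ j \<le> r i $ j - w i + \<Delta>" for i j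
        using that q_le[of j i] by (auto dest: spec[of _ j])
    qed
  qed (rule lower)
  have "\<forall>j. p j - \<Delta> \<le> (\<chi> j. (p j + q j) / 2) $ j \<and> (\<chi> j. (p j + q j) / 2) $ j \<le> q j + \<Delta>"
    using pq_le by (auto simp: field_simps)
  with lower optimal show ?thesis by blast
qed

end
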